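(* Let $(G,+)$ be an abelian group with identity $0$. Let $M$ be a matroid over $G$ and let $N$ be a sparse paving matroid over $G$, both of the same rank $n$, such that $0\notin E(N)$. Assume further that one of the following holds: (1) $|E(M)|<\min\{|E(N)|-1,\,p(G)\}$; or (2) $E(M)$ is not a progression, $G$ is finite, $|E(M)|=|E(N)|-1$ and $|E(N)|<p(G)$; or (3) $E(M)$ is neither a progression nor a semi-progression, $G$ is finite and $|E(M)|=|E(N)|<p(G)$; or (4) $|E(M)|<|E(N)|-n-1$. Then $M$ is matched to $N$.
   Context: $p(G)$ denotes the smallest cardinality of a nonzero subgroup of $G$. A matroid over $G$ is a matroid $M$ whose finite ground set $E(M)$ is a subset of $G$; all matroids are assumed loopless. A matroid of rank $n$ is paving if every $(n-1)$-element subset of its ground set is independent; it is sparse paving if both it and its dual matroid are paving. A progression of length $k$ with difference $x$ and initial term $a$ ($x,a\in G$) is a set $\{a,a+x,\dots,a+(k-1)x\}$; a set $A$ is a semi-progression if $A\setminus\{a\}$ is a progression for some $a\in A$. For matroids $M,N$ over $G$ with $r(M)=r(N)=n>0$ and bases $\mathcal{M}=\{a_1,\dots,a_n\}$ of $M$ and $\mathcal{N}=\{b_1,\dots,b_n\}$ of $N$, $\mathcal{M}$ is matched to $\mathcal{N}$ if there is a permutation $\pi\in S_n$ with $a_i+b_{\pi(i)}\notin E(M)$ for all $i$. $M$ is matched to $N$ if for every basis $\mathcal{M}$ of $M$ there exists a basis $\mathcal{N}$ of $N$ such that $\mathcal{M}$ is matched to $\mathcal{N}$. *)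

theory Defs
  imports Main "HOL-Library.Extended_Nat"
begin

definition matroid :: "'a set \<Rightarrow> ('a set \<Rightarrow> bool) \<Rightarrow> bool" where
  "matroid E I \<longleftrightarrow> finite E \<and> I {} \<and> (\<forall>X. I X \<longrightarrow> X \<subseteq> E)
     \<and> (\<forall>X Y. I X \<and> Y \<subseteq> X \<longrightarrow> I Y)
     \<and> (\<forall>X Y. I X \<and> I Y \<and> card X < card Y \<longrightarrow> (\<exists>y\<in>Y - X. I (insert y X)))"

definition loopless :: "'a set \<Rightarrow> ('a set \<Rightarrow> bool) \<Rightarrow> bool" where
  "loopless E I \<longleftrightarrow> (\<forall>e\<in>E. I {e})"

definition basis :: "'a set \<Rightarrow> ('a set \<Rightarrow> bool) \<Rightarrow> 'a set \<Rightarrow> bool" where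
  "basis E I B \<longleftrightarrow> I B \<and> (\<forall>X. I X \<and> B \<subseteq> X \<longrightarrow> X = B)"

definition mrank :: "'a set \<Rightarrow> ('a set \<Rightarrow> bool) \<Rightarrow> nat" where
  "mrank E I = Max (card ` Collect I)"

definition dual_indep :: "'a set \<Rightarrow> ('a set \<Rightarrow> bool) \<Rightarrow> 'a set \<Rightarrow> bool" where
  "dual_indep E I X \<longleftrightarrow> X \<subseteq> E \<and> (\<exists>B. basis E I B \<and> X \<inter> B = {})"

definition paving :: "'a set \<Rightarrow> ('a set \<Rightarrow> bool) \<Rightarrow> bool" where
  "paving E I \<longleftrightarrow> (\<forall>X. X \<subseteq> E \<and> card X = mrank E I - 1 \<longrightarrow> I X)"

definition sparse_paving :: "'a set \<Rightarrow> ('a set \<Rightarrow> bool) \<Rightarrow> bool" where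
  "sparse_paving E I \<longleftrightarrow> paving E I \<and> paving E (dual_indep E I)"

(* subgroups of an abelian group (type class), and p(G) as an extended natural;
   p(G) = \<infinity> if there is no finite nonzero subgroup *)
definition subgroup_add :: "('a::ab_group_add) set \<Rightarrow> bool" where
  "subgroup_add H \<longleftrightarrow> 0 \<in> H \<and> (\<forall>x\<in>H. \<forall>y\<in>H. x + y \<in> H) \<and> (\<forall>x\<in>H. - x \<in> H)"

definition pG :: "'a::ab_group_add itself \<Rightarrow> enat" where
  "pG _ = (INF H \<in> {H :: 'a set. subgroup_add H \<and> H \<noteq> {0}}.
              (if finite H then enat (card H) else \<infinity>))"

definition nsmul :: "nat \<Rightarrow> 'a::ab_group_add \<Rightarrow> 'a" where
  "nsmul i x = (\<Sum>j<i. x)"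

definition progression :: "('a::ab_group_add) set \<Rightarrow> bool" where
  "progression A \<longleftrightarrow> (\<exists>k x a. A = {a + nsmul i x | i. i < k})"

definition semi_progression :: "('a::ab_group_add) set \<Rightarrow> bool" where
  "semi_progression A \<longleftrightarrow> (\<exists>a\<in>A. progression (A - {a}))"

definition basis_matched :: "('a::ab_group_add) set \<Rightarrow> 'a set \<Rightarrow> 'a set \<Rightarrow> bool" where
  "basis_matched EM A B \<longleftrightarrow> (\<exists>f. bij_betw f A B \<and> (\<forall>a\<in>A. a + f a \<notin> EM))"

definition matched :: "('a::ab_group_add) set \<Rightarrow> ('a set \<Rightarrow> bool) \<Rightarrow> 'a set \<Rightarrow> ('a set \<Rightarrow> bool) \<Rightarrow> bool" where
  "matched EM IM EN IN \<longleftrightarrow>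
     (\<forall>A. basis EM IM A \<longrightarrow> (\<exists>B. basis EN IN B \<and> basis_matched EM A B))"

end

theory Submission
  imports Defs "HOL-Library.Set_Algebras"
begin

text \<open>
  Join \<open>a\<close> in a basis \<open>A\<close> of \<open>M\<close> to \<open>b \<in> E(N)\<close> when \<open>a + b \<notin> E(M)\<close>. If \<open>X\<close> is the set
  of those \<open>b\<close> joined to no element of \<open>S \<subseteq> A\<close>, then \<open>({0} \<union> X) + S \<subseteq> E(M)\<close>, so the
  Cauchy--Davenport inequality \<open>|P + Q| \<ge> min(p(G), |P| + |Q| - 1)\<close> gives \<open>|X| + |S| \<le> |E(M)|\<close>
  (in case (4) the trivial bound \<open>|X| \<le> |E(M)|\<close> suffices). This is Hall's condition, with a
  spare neighbour of \<open>A\<close> in cases (1), (2) and (4); in case (3) a spare neighbour exists unless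
  \<open>({0} \<union> X, A)\<close> is a critical pair, and then a weak form of Vosper's theorem makes \<open>E(M)\<close> a
  progression. Hall's theorem matches \<open>A\<close> onto an \<open>n\<close>-subset of \<open>E(N)\<close>; a spare neighbour
  yields two such subsets differing in one element, and in a sparse paving matroid one of them
  is a basis.
\<close>

section \<open>Translation-invariant sets and progressions\<close>

lemma nsmul_0 [simp]: "nsmul 0 x = 0"
  by (simp add: nsmul_def)

lemma nsmul_Suc: "nsmul (Suc i) x = nsmul i x + x"
  by (simp add: nsmul_def)

lemma nsmul_add: "nsmul (i + j) x = nsmul i x + nsmul j x"
  by (induction j) (simp_all add: nsmul_Suc add.assoc)

lemma nsmul_uminus: "nsmul i (- x) = - nsmul i x"
  by (simp add: nsmul_def sum_negf)

lemma progression_translate: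
  assumes "progression A"
  shows "progression ((+) c ` A)"
proof -
  obtain k x a where "A = {a + nsmul i x | i. i < k}"
    using assms unfolding progression_def by blast
  then have "(+) c ` A = {(c + a) + nsmul i x | i. i < k}"
    by (auto simp: add.assoc)
  then show ?thesis
    unfolding progression_def by blast
qed

lemma subgroup_add_translation_stabiliser:
  fixes R :: "'a::ab_group_add set"
  shows "subgroup_add {h. (+) h ` R = R}"
proof -
  have translate_add: "(+) (h + k) ` R = (+) h ` ((+) k ` R)" for h k
    by (simp add: image_image add.assoc)
  show ?thesis
    unfolding subgroup_add_def
  proof (intro conjI ballI)
    show "0 \<in> {h. (+) h ` R = R}"
      by simp
  next
    fix h k
    assume "h \<in> {h. (+) h ` R = R}" "k \<in> {h. (+) h ` R = R}"
    then show "h + k \<in> {h. (+) h ` R = R}"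
      by (simp add: translate_add)
  next
    fix h
    assume "h \<in> {h. (+) h ` R = R}"
    then have "(+) (- h) ` R = (+) (- h) ` ((+) h ` R)"
      by (simp only: mem_Collect_eq)
    also have "\<dots> = R"
      by (simp only: translate_add[symmetric] add.left_inverse) simp
    finally show "- h \<in> {h. (+) h ` R = R}"
      by (simp only: mem_Collect_eq)
  qed
qed

text \<open>The translations fixing \<open>R\<close> form a subgroup of order at most \<open>|R|\<close>.\<close>
lemma pG_le_card_if_translation_invariant:
  fixes R :: "'a::ab_group_add set"
  assumes "finite R" "r \<in> R" "d \<noteq> 0" "(+) d ` R \<subseteq> R"
  shows "pG TYPE('a) \<le> enat (card R)"
proof -
  define H where "H = {h. (+) h ` R = R}"
  have "(+) d ` R = R"
    using assms(1,4) by (simp add: card_subset_eq card_image)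
  then have "H \<noteq> {0}"
    using assms(3) unfolding H_def by blast
  have H_sub: "H \<subseteq> (\<lambda>x. x - r) ` R"
  proof
    fix h
    assume "h \<in> H"
    then have "h + r \<in> R"
      using assms(2) unfolding H_def by blast
    then show "h \<in> (\<lambda>x. x - r) ` R"
      by (rule image_eqI[rotated]) simp
  qed
  have "finite H"
    using assms(1) H_sub by (rule finite_surj)
  moreover have "card H \<le> card R"
    using order_trans[OF card_mono[OF finite_imageI[OF assms(1)] H_sub] card_image_le[OF assms(1)]] .
  ultimately have "pG TYPE('a) \<le> enat (card H)"
    using subgroup_add_translation_stabiliser \<open>H \<noteq> {0}\<close> unfolding pG_def
    by (intro INF_lower2[of H]) (auto simp: H_def)
  with \<open>card H \<le> card R\<close> show ?thesis
    by (simp add: order_trans)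
qed

lemma less_pG_if_le: "m \<le> n \<Longrightarrow> enat n < pG TYPE('a::ab_group_add) \<Longrightarrow> enat m < pG TYPE('a)"
  by (meson enat_ord_simps(1) order_le_less_trans)

lemma translation_orbit_leaves:
  fixes P :: "'a::ab_group_add set"
  assumes "finite P" "d \<noteq> 0" "enat (card P) < pG TYPE('a)"
  shows "\<exists>j. y + nsmul j d \<notin> P"
proof (rule ccontr)
  let ?O = "range (\<lambda>j. y + nsmul j d)"
  assume "\<not> ?thesis"
  then have "?O \<subseteq> P"
    by auto
  have "(+) d ` ?O \<subseteq> ?O"
  proof
    fix x
    assume "x \<in> (+) d ` ?O"
    then obtain j where "x = d + (y + nsmul j d)"
      by blast
    then have "x = y + nsmul (Suc j) d"
      by (simp add: nsmul_Suc algebra_simps)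
    then show "x \<in> ?O"
      by blast
  qed
  moreover have "y + nsmul 0 d \<in> ?O"
    by (rule rangeI)
  ultimately have "pG TYPE('a) \<le> enat (card ?O)"
    using pG_le_card_if_translation_invariant[of ?O] finite_subset[OF \<open>?O \<subseteq> P\<close> assms(1)] assms(2)
    by simp
  also have "\<dots> \<le> enat (card P)"
    using card_mono[OF assms(1) \<open>?O \<subseteq> P\<close>] by simp
  finally show False
    using assms(3) by simp
qed

lemma first_exit_translation_orbit:
  fixes P :: "'a::ab_group_add set"
  assumes "finite P" "enat (card P) < pG TYPE('a)" "(+) d ` P - P = {z}" "y \<in> P"
  shows "\<exists>j. y + nsmul j d = z \<and> (\<forall>i < j. y + nsmul i d \<in> P)"
proof -
  have "d \<noteq> 0"
    using assms(3) by auto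
  then obtain j where "y + nsmul j d \<notin> P"
    using translation_orbit_leaves[OF assms(1) _ assms(2)] by blast
  define k where "k = (LEAST j. y + nsmul j d \<notin> P)"
  have out: "y + nsmul k d \<notin> P"
    unfolding k_def using \<open>y + nsmul j d \<notin> P\<close> by (rule LeastI)
  have inside: "\<forall>i < k. y + nsmul i d \<in> P"
    unfolding k_def using not_less_Least by blast
  from out obtain i where i: "k = Suc i"
    using assms(4) by (cases k) auto
  then have "y + nsmul k d = d + (y + nsmul i d)"
    by (simp add: nsmul_Suc algebra_simps)
  then have "y + nsmul k d \<in> (+) d ` P"
    using inside i by auto
  then show ?thesis
    using out inside assms(3) by blast
qed

text \<open>From every point of \<open>P\<close>, steps of \<open>d\<close> first leave \<open>P\<close> at the unique point \<open>z\<close> of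
  \<open>(d + P) - P\<close>; so \<open>P \<union> {z}\<close> is a union of initial segments of \<open>z, z - d, z - 2d, \<dots>\<close>, that
  is, the longest of them.\<close>
lemma progression_if_card_Un_translate:
  fixes P :: "'a::ab_group_add set"
  assumes "finite P" "card (P \<union> (+) d ` P) = card P + 1" "enat (card P) < pG TYPE('a)"
  shows "progression (P \<union> (+) d ` P)"
proof -
  have "card (P \<union> ((+) d ` P - P)) = card P + card ((+) d ` P - P)"
    using assms(1) by (intro card_Un_disjoint) auto
  then have "card ((+) d ` P - P) = 1"
    using assms(2) by (simp add: Un_Diff_cancel)
  then obtain z where z: "(+) d ` P - P = {z}"
    by (auto simp: card_1_singleton_iff)
  then have "P \<noteq> {}"
    by auto
  have "\<forall>y\<in>P. \<exists>j. y + nsmul j d = z \<and> (\<forall>i < j. y + nsmul i d \<in> P)"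
    using first_exit_translation_orbit[OF assms(1,3) z] by blast
  from bchoice[OF this] obtain exit
    where exit: "\<forall>y\<in>P. y + nsmul (exit y) d = z \<and> (\<forall>i < exit y. y + nsmul i d \<in> P)"
    by blast
  define K where "K = Max (exit ` P)"
  have "K \<in> exit ` P"
    unfolding K_def using assms(1) \<open>P \<noteq> {}\<close> by (intro Max_in) auto
  then obtain y\<^sub>0 where y\<^sub>0: "y\<^sub>0 \<in> P" "exit y\<^sub>0 = K"
    by auto
  have "P \<union> (+) d ` P = insert z P"
    using z by blast
  also have "\<dots> = {z + nsmul m (- d) | m. m < Suc K}"
  proof (intro equalityI subsetI)
    fix x
    assume "x \<in> insert z P"
    then consider "x = z + nsmul 0 (- d)" | "x \<in> P"
      by auto
    then show "x \<in> {z + nsmul m (- d) | m. m < Suc K}"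
    proof cases
      case 2
      then have "x = z + nsmul (exit x) (- d)" "exit x < Suc K"
        using exit assms(1) by (auto simp: nsmul_uminus K_def less_Suc_eq_le)
      then show ?thesis
        by blast
    qed blast
  next
    fix x
    assume "x \<in> {z + nsmul m (- d) | m. m < Suc K}"
    then obtain m where m: "m \<le> K" "x = z + nsmul m (- d)"
      by (auto simp: less_Suc_eq_le)
    have "z = y\<^sub>0 + nsmul (K - m) d + nsmul m d"
      using exit[rule_format, OF y\<^sub>0(1)] m(1) y\<^sub>0(2) by (simp add: add.assoc flip: nsmul_add)
    then have "x = y\<^sub>0 + nsmul (K - m) d"
      using m(2) by (simp add: nsmul_uminus)
    moreover have "m = 0 \<or> K - m < exit y\<^sub>0"
      using m(1) y\<^sub>0(2) by auto
    ultimately show "x \<in> insert z P"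
      using exit[rule_format, OF y\<^sub>0(1)] m(2) by auto
  qed
  finally show ?thesis
    unfolding progression_def by blast
qed

section \<open>The Cauchy--Davenport theorem\<close>

lemma card_le_card_sumset:
  fixes P Q :: "'a::ab_group_add set"
  assumes "finite P" "finite Q" "q \<in> Q"
  shows "card P \<le> card (P + Q)"
proof -
  have "(+) q ` P \<subseteq> P + Q"
    using assms(3) by (auto simp: add.commute)
  then have "card ((+) q ` P) \<le> card (P + Q)"
    using assms by (intro card_mono) (auto simp: finite_set_plus)
  then show ?thesis
    by (simp add: card_image)
qed

lemma davenport_transform:
  fixes P Q :: "'a::ab_group_add set"
  assumes "finite P" "finite Q"
  shows "card (P \<union> (+) e ` Q) + card {x\<in>Q. e + x \<in> P} = card P + card Q"
    and "(P \<union> (+) e ` Q) + {x\<in>Q. e + x \<in> P} \<subseteq> P + Q"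
    and "card ((P \<union> (+) e ` Q) + {x\<in>Q. e + x \<in> P}) \<le> card (P + Q)"
proof -
  have "card {x\<in>Q. e + x \<in> P} = card ((+) e ` {x\<in>Q. e + x \<in> P})"
    by (simp add: card_image)
  also have "(+) e ` {x\<in>Q. e + x \<in> P} = P \<inter> (+) e ` Q"
    by auto
  finally show "card (P \<union> (+) e ` Q) + card {x\<in>Q. e + x \<in> P} = card P + card Q"
    using card_Un_Int[OF assms(1) finite_imageI[OF assms(2), of "(+) e"]]
    by (simp add: card_image inj_on_add)
  show sub: "(P \<union> (+) e ` Q) + {x\<in>Q. e + x \<in> P} \<subseteq> P + Q"
  proof
    fix y
    assume "y \<in> (P \<union> (+) e ` Q) + {x\<in>Q. e + x \<in> P}"
    then obtain u x where y: "y = u + x" "u \<in> P \<union> (+) e ` Q" "x \<in> Q" "e + x \<in> P"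
      by (auto elim: set_plus_elim)
    show "y \<in> P + Q"
    proof (cases "u \<in> P")
      case True
      then show ?thesis
        using y by auto
    next
      case False
      then obtain x' where "x' \<in> Q" "y = (e + x) + x'"
        using y by (auto simp: algebra_simps)
      then show ?thesis
        using y(4) by auto
    qed
  qed
  then show "card ((P \<union> (+) e ` Q) + {x\<in>Q. e + x \<in> P}) \<le> card (P + Q)"
    using assms by (intro card_mono) (auto simp: finite_set_plus)
qed

lemma pG_le_card_sumset_if_translation_closed:
  fixes P Q :: "'a::ab_group_add set"
  assumes "finite P" "finite Q" "P \<noteq> {}" "\<not> card Q \<le> 1"
    and closed: "\<forall>p\<in>P. \<forall>q\<in>Q. \<forall>q'\<in>Q. (p - q) + q' \<in> P"
  shows "pG TYPE('a) \<le> enat (card (P + Q))"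
proof -
  obtain q q' where q: "q \<in> Q" "q' \<in> Q" "q \<noteq> q'"
    using assms(4) card_le_Suc0_iff_eq[OF assms(2)] by (auto simp: One_nat_def)
  obtain p where "p \<in> P"
    using assms(3) by blast
  have "(+) (q' - q) ` P \<subseteq> P"
  proof
    fix x
    assume "x \<in> (+) (q' - q) ` P"
    then obtain p' where "p' \<in> P" "x = q' - q + p'"
      by blast
    moreover have "(p' - q) + q' \<in> P"
      using closed \<open>p' \<in> P\<close> q by blast
    moreover have "q' - q + p' = (p' - q) + q'"
      by (simp add: algebra_simps)
    ultimately show "x \<in> P"
      by (simp only:)
  qed
  moreover have "q' - q \<noteq> 0"
    using q(3) by simp
  ultimately have "pG TYPE('a) \<le> enat (card P)"
    using pG_le_card_if_translation_invariant[OF assms(1) \<open>p \<in> P\<close>] by blast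
  also have "\<dots> \<le> enat (card (P + Q))"
    using card_le_card_sumset assms(1,2) q(1) by simp
  finally show ?thesis .
qed

theorem cauchy_davenport:
  fixes P Q :: "'a::ab_group_add set"
  assumes "finite P" "finite Q" "P \<noteq> {}" "Q \<noteq> {}" "enat (card (P + Q)) < pG TYPE('a)"
  shows "card P + card Q \<le> card (P + Q) + 1"
  using assms
proof (induction "card Q" arbitrary: P Q rule: less_induct)
  case less
  show ?case
  proof (cases "card Q \<le> 1")
    case True
    moreover have "card Q \<noteq> 0"
      using less.prems(2,4) by simp
    ultimately obtain q where "Q = {q}"
      by (auto simp: card_1_singleton_iff le_Suc_eq)
    then show ?thesis
      by (simp add: card_plus_sing)
  next
    case False
    then obtain p q q' where pq: "p \<in> P" "q \<in> Q" "q' \<in> Q" "(p - q) + q' \<notin> P"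
      using pG_le_card_sumset_if_translation_closed[OF less.prems(1-3)] less.prems(5) leD by blast
    define e where "e = p - q"
    define P' where "P' = P \<union> (+) e ` Q"
    define Q' where "Q' = {x\<in>Q. e + x \<in> P}"
    have card_eq: "card P' + card Q' = card P + card Q"
      and card_le: "card (P' + Q') \<le> card (P + Q)"
      unfolding P'_def Q'_def using davenport_transform[OF less.prems(1,2)] by blast+
    have "q \<in> Q'" "Q' \<subset> Q"
      using pq unfolding Q'_def e_def by auto
    then have "card Q' < card Q"
      using less.prems(2) psubset_card_mono by blast
    moreover have "finite P'" "finite Q'" "P' \<noteq> {}" "Q' \<noteq> {}"
      using less.prems(1-3) \<open>q \<in> Q'\<close> unfolding P'_def Q'_def by auto
    moreover have "enat (card (P' + Q')) < pG TYPE('a)"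
      using card_le less.prems(5) by (rule less_pG_if_le)
    ultimately have "card P' + card Q' \<le> card (P' + Q') + 1"
      using less.hyps by blast
    then show ?thesis
      using card_eq card_le by linarith
  qed
qed

section \<open>Critical pairs\<close>

text \<open>\<open>q + P\<close> and \<open>p + (Q - {q})\<close> are disjoint subsets of \<open>P + Q\<close> whose sizes add up to
  \<open>|P + Q|\<close>.\<close>
lemma critical_sumset_split:
  fixes P Q :: "'a::ab_group_add set"
  assumes "finite P" "finite Q" "card (P + Q) + 1 = card P + card Q"
    and "p \<in> P" "q \<in> Q" "{x\<in>Q. (p - q) + x \<in> P} = {q}"
  shows "P + Q - (+) q ` P = (+) p ` (Q - {q})"
proof -
  have disjoint: "(+) q ` P \<inter> (+) p ` (Q - {q}) = {}"
  proof (intro equals0I)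
    fix y
    assume "y \<in> (+) q ` P \<inter> (+) p ` (Q - {q})"
    then obtain p' x where "p' \<in> P" "x \<in> Q - {q}" "q + p' = p + x"
      by auto
    moreover from this(3) have "(p - q) + x = p'"
      by (simp add: algebra_simps)
    ultimately show False
      using assms(6) by blast
  qed
  have "(+) q ` P \<subseteq> P + Q"
    using assms(5) by (auto simp: add.commute)
  moreover have "(+) p ` (Q - {q}) \<subseteq> P + Q"
    using assms(4) by auto
  ultimately have sub: "(+) q ` P \<union> (+) p ` (Q - {q}) \<subseteq> P + Q"
    by blast
  have "0 < card Q"
    using assms(2,5) by (auto simp: card_gt_0_iff)
  have "card ((+) q ` P \<union> (+) p ` (Q - {q})) = card P + (card Q - 1)"
    using card_Un_disjoint[OF _ _ disjoint] assms(1,2,5) by (simp add: card_image)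
  also have "\<dots> = card (P + Q)"
    using assms(3) \<open>0 < card Q\<close> by linarith
  finally have "(+) q ` P \<union> (+) p ` (Q - {q}) = P + Q"
    using assms(1,2) sub by (intro card_subset_eq) (auto simp: finite_set_plus)
  then show ?thesis
    using disjoint by blast
qed

text \<open>Otherwise \<open>p\<^sub>0 + (Q - {q})\<close> and \<open>p\<^sub>1 + (Q - {q})\<close> both equal \<open>(P + Q) - (q + P)\<close>, so
  \<open>Q - {q}\<close> would be invariant under translation by \<open>p\<^sub>1 - p\<^sub>0\<close>.\<close>
lemma critical_sumset_isolated_unique:
  fixes P Q :: "'a::ab_group_add set"
  assumes "finite P" "finite Q" "2 \<le> card Q" "card (P + Q) + 1 = card P + card Q"
    and "enat (card (P + Q)) < pG TYPE('a)" and "q \<in> Q" "p\<^sub>0 \<in> P" "p\<^sub>1 \<in> P"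
    and "{x\<in>Q. (p\<^sub>0 - q) + x \<in> P} = {q}" "{x\<in>Q. (p\<^sub>1 - q) + x \<in> P} = {q}"
  shows "p\<^sub>0 = p\<^sub>1"
proof (rule ccontr)
  assume "p\<^sub>0 \<noteq> p\<^sub>1"
  define R where "R = Q - {q}"
  have "card R = card Q - 1"
    unfolding R_def using assms(6) by simp
  have "(+) p\<^sub>0 ` R = (+) p\<^sub>1 ` R"
    unfolding R_def using critical_sumset_split[OF assms(1,2,4) assms(7,6,9)]
      critical_sumset_split[OF assms(1,2,4) assms(8,6,10)] by simp
  then have "(+) (p\<^sub>1 - p\<^sub>0) ` R = (+) (- p\<^sub>0) ` ((+) p\<^sub>0 ` R)"
    by (simp add: image_image algebra_simps)
  also have "\<dots> = R"
    by (simp add: image_image)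
  finally have "(+) (p\<^sub>1 - p\<^sub>0) ` R \<subseteq> R"
    by simp
  moreover obtain r where "r \<in> R"
    using \<open>card R = card Q - 1\<close> assms(3) by fastforce
  moreover have "finite R" "p\<^sub>1 - p\<^sub>0 \<noteq> 0"
    unfolding R_def using assms(2) \<open>p\<^sub>0 \<noteq> p\<^sub>1\<close> by auto
  ultimately have "pG TYPE('a) \<le> enat (card R)"
    using pG_le_card_if_translation_invariant by blast
  moreover have "card Q \<le> card (P + Q)"
    using card_le_card_sumset[OF assms(2,1,7)] by (simp add: add.commute)
  then have "card R < card (P + Q)"
    using \<open>card R = card Q - 1\<close> assms(3) by linarith
  then have "enat (card R) < pG TYPE('a)"
    using assms(5) by (meson enat_ord_simps(2) less_trans)
  ultimately show False
    using leD by blast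
qed

lemma isolated_if_no_transform:
  fixes P Q :: "'a::ab_group_add set"
  assumes "finite Q" "q \<in> Q" "p \<in> P" "\<not> (\<forall>x\<in>Q. (p - q) + x \<in> P)"
    and no_transform: "\<not> (\<exists>e. 2 \<le> card {x\<in>Q. e + x \<in> P} \<and> card {x\<in>Q. e + x \<in> P} < card Q)"
  shows "{x\<in>Q. (p - q) + x \<in> P} = {q}"
proof -
  let ?Q\<^sub>e = "{x\<in>Q. (p - q) + x \<in> P}"
  have "q \<in> ?Q\<^sub>e"
    using assms(2,3) by simp
  have "?Q\<^sub>e \<subset> Q"
    using assms(4) by auto
  then have "card ?Q\<^sub>e < card Q"
    by (rule psubset_card_mono[OF assms(1)])
  moreover have "\<not> (2 \<le> card ?Q\<^sub>e \<and> card ?Q\<^sub>e < card Q)"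
    using no_transform by blast
  ultimately have "card ?Q\<^sub>e \<le> 1"
    by linarith
  moreover have "finite ?Q\<^sub>e"
    using assms(1) by simp
  ultimately have "\<forall>x\<in>?Q\<^sub>e. x = q"
    using \<open>q \<in> ?Q\<^sub>e\<close> by (simp add: card_le_Suc0_iff_eq)
  with \<open>q \<in> ?Q\<^sub>e\<close> show ?thesis
    by blast
qed

lemma finite_shifts:
  fixes P Q :: "'a::ab_group_add set"
  assumes "finite P" "q \<in> Q"
  shows "finite {e. \<forall>x\<in>Q. e + x \<in> P}"
proof -
  have "{e. \<forall>x\<in>Q. e + x \<in> P} \<subseteq> (\<lambda>p. p - q) ` P"
  proof
    fix e
    assume "e \<in> {e. \<forall>x\<in>Q. e + x \<in> P}"
    then have "e + q \<in> P"
      using assms(2) by blast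
    then show "e \<in> (\<lambda>p. p - q) ` P"
      by (rule image_eqI[rotated]) simp
  qed
  with assms(1) show ?thesis
    by (rule finite_surj)
qed

text \<open>Without a Davenport transform that shrinks \<open>Q\<close>, all \<open>p \<in> P\<close> but at most one satisfy
  \<open>p - q + Q \<subseteq> P\<close>.\<close>
lemma critical_pair_card_le_shifts:
  fixes P Q :: "'a::ab_group_add set"
  assumes "finite P" "finite Q" "2 \<le> card Q" "card (P + Q) + 1 = card P + card Q"
    and "enat (card (P + Q)) < pG TYPE('a)" "q \<in> Q"
    and no_transform: "\<not> (\<exists>e. 2 \<le> card {x\<in>Q. e + x \<in> P} \<and> card {x\<in>Q. e + x \<in> P} < card Q)"
  shows "card P \<le> card {e. \<forall>x\<in>Q. e + x \<in> P} + 1"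
proof -
  define T where "T = {e. \<forall>x\<in>Q. e + x \<in> P}"
  define I where "I = {p\<in>P. p - q \<notin> T}"
  have "card I \<le> 1"
  proof -
    have "{x\<in>Q. (p - q) + x \<in> P} = {q}" if "p \<in> I" for p
      using isolated_if_no_transform[OF assms(2,6) _ _ no_transform] that unfolding I_def T_def by blast
    then have "p\<^sub>0 = p\<^sub>1" if "p\<^sub>0 \<in> I" "p\<^sub>1 \<in> I" for p\<^sub>0 p\<^sub>1
      using critical_sumset_isolated_unique[OF assms(1-6)] that unfolding I_def by blast
    moreover have "finite I"
      using assms(1) unfolding I_def by simp
    ultimately show ?thesis
      by (simp add: card_le_Suc0_iff_eq)
  qed
  have "finite T"
    unfolding T_def using assms(1,6) by (rule finite_shifts)
  have "P \<subseteq> I \<union> (+) q ` T"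
  proof
    fix p
    assume "p \<in> P"
    then have "p \<in> I \<or> p = q + (p - q) \<and> p - q \<in> T"
      unfolding I_def by auto
    then show "p \<in> I \<union> (+) q ` T"
      by blast
  qed
  then have "card P \<le> card (I \<union> (+) q ` T)"
    using \<open>finite T\<close> assms(1) by (intro card_mono) (auto simp: I_def)
  also have "\<dots> \<le> card I + card ((+) q ` T)"
    by (rule card_Un_le)
  also have "\<dots> \<le> card T + 1"
    using \<open>card I \<le> 1\<close> by (simp add: card_image)
  finally show ?thesis
    unfolding T_def .
qed

text \<open>Cauchy--Davenport applied to \<open>T + Q \<subseteq> P\<close>, for the set \<open>T\<close> of the previous lemma.\<close>
lemma critical_pair_card_le_two:
  fixes P Q :: "'a::ab_group_add set"
  assumes "finite P" "finite Q" "2 \<le> card P" "2 \<le> card Q"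
    and "card (P + Q) + 1 = card P + card Q" "enat (card (P + Q)) < pG TYPE('a)"
    and no_transform: "\<not> (\<exists>e. 2 \<le> card {x\<in>Q. e + x \<in> P} \<and> card {x\<in>Q. e + x \<in> P} < card Q)"
  shows "card Q \<le> 2"
proof -
  define T where "T = {e. \<forall>x\<in>Q. e + x \<in> P}"
  have "Q \<noteq> {}"
    using assms(4) by auto
  then obtain q where "q \<in> Q"
    by blast
  then have "finite T" "card P \<le> card T + 1"
    using finite_shifts[OF assms(1)] critical_pair_card_le_shifts[OF assms(1,2,4,5,6) _ no_transform]
    unfolding T_def by blast+
  have "T + Q \<subseteq> P"
    unfolding T_def by (auto elim: set_plus_elim)
  then have "card (T + Q) \<le> card P"
    using assms(1) by (rule card_mono[rotated])
  moreover have "card T + card Q \<le> card (T + Q) + 1"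
  proof (rule cauchy_davenport)
    show "finite T" "finite Q"
      by fact+
    show "T \<noteq> {}" "Q \<noteq> {}"
      using \<open>card P \<le> card T + 1\<close> assms(3) \<open>q \<in> Q\<close> by auto
    have "card (T + Q) \<le> card (P + Q)"
      using card_le_card_sumset[OF assms(1,2) \<open>q \<in> Q\<close>] \<open>card (T + Q) \<le> card P\<close> by linarith
    then show "enat (card (T + Q)) < pG TYPE('a)"
      using assms(6) by (rule less_pG_if_le)
  qed
  ultimately show ?thesis
    using \<open>card P \<le> card T + 1\<close> by linarith
qed

lemma critical_davenport_transform:
  fixes P Q :: "'a::ab_group_add set"
  assumes "finite P" "finite Q" "P \<noteq> {}" "{x\<in>Q. e + x \<in> P} \<noteq> {}"
    and "card (P + Q) + 1 = card P + card Q" "enat (card (P + Q)) < pG TYPE('a)"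
  shows "(P \<union> (+) e ` Q) + {x\<in>Q. e + x \<in> P} = P + Q"
proof -
  let ?P' = "P \<union> (+) e ` Q" and ?Q' = "{x\<in>Q. e + x \<in> P}"
  have card_eq: "card ?P' + card ?Q' = card P + card Q" and sub: "?P' + ?Q' \<subseteq> P + Q"
    and card_le: "card (?P' + ?Q') \<le> card (P + Q)"
    using davenport_transform[OF assms(1,2)] by blast+
  have fin: "finite ?P'" "finite ?Q'" and "?P' \<noteq> {}"
    using assms(1-3) by auto
  moreover have "enat (card (?P' + ?Q')) < pG TYPE('a)"
    using card_le assms(6) by (rule less_pG_if_le)
  ultimately have "card ?P' + card ?Q' \<le> card (?P' + ?Q') + 1"
    using cauchy_davenport[OF fin \<open>?P' \<noteq> {}\<close> assms(4)] by blast
  then have "card (P + Q) \<le> card (?P' + ?Q')"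
    using card_eq assms(5) by linarith
  with card_le have "card (?P' + ?Q') = card (P + Q)"
    by linarith
  then show ?thesis
    using sub assms(1,2) by (intro card_subset_eq) (auto simp: finite_set_plus)
qed

lemma sumset_pair:
  fixes P :: "'a::ab_group_add set"
  shows "P + {q\<^sub>1, q\<^sub>2} = (+) q\<^sub>1 ` (P \<union> (+) (q\<^sub>2 - q\<^sub>1) ` P)"
proof (intro equalityI subsetI)
  fix x
  assume "x \<in> P + {q\<^sub>1, q\<^sub>2}"
  then obtain p where "p \<in> P" "x = p + q\<^sub>1 \<or> x = p + q\<^sub>2"
    by (auto elim: set_plus_elim)
  moreover have "p + q\<^sub>1 = q\<^sub>1 + p" "p + q\<^sub>2 = q\<^sub>1 + ((q\<^sub>2 - q\<^sub>1) + p)"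
    by (simp_all add: algebra_simps)
  ultimately show "x \<in> (+) q\<^sub>1 ` (P \<union> (+) (q\<^sub>2 - q\<^sub>1) ` P)"
    by blast
next
  fix x
  assume "x \<in> (+) q\<^sub>1 ` (P \<union> (+) (q\<^sub>2 - q\<^sub>1) ` P)"
  then obtain p where "p \<in> P" "x = q\<^sub>1 + p \<or> x = q\<^sub>1 + ((q\<^sub>2 - q\<^sub>1) + p)"
    by blast
  moreover have "q\<^sub>1 + p = p + q\<^sub>1" "q\<^sub>1 + ((q\<^sub>2 - q\<^sub>1) + p) = p + q\<^sub>2"
    by (simp_all add: algebra_simps)
  ultimately show "x \<in> P + {q\<^sub>1, q\<^sub>2}"
    by auto
qed

lemma critical_sumset_pair_progression:
  fixes P Q :: "'a::ab_group_add set"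
  assumes "finite P" "card Q = 2" "card (P + Q) = card P + 1" "enat (card (P + Q)) < pG TYPE('a)"
  shows "progression (P + Q)"
proof -
  obtain q\<^sub>1 q\<^sub>2 where Q: "Q = {q\<^sub>1, q\<^sub>2}"
    using assms(2) by (auto simp: card_2_iff)
  let ?W = "P \<union> (+) (q\<^sub>2 - q\<^sub>1) ` P"
  have sum: "P + Q = (+) q\<^sub>1 ` ?W"
    unfolding Q by (rule sumset_pair)
  then have "card ?W = card P + 1"
    using assms(3) by (simp add: card_image)
  moreover have "card P < card (P + Q)"
    using assms(3) by simp
  then have "enat (card P) < pG TYPE('a)"
    using assms(4) by (meson enat_ord_simps(2) less_trans)
  ultimately have "progression ?W"
    by (rule progression_if_card_Un_translate[OF assms(1)])
  then show ?thesis
    unfolding sum by (rule progression_translate)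
qed

theorem sumset_progression_if_critical:
  fixes P Q :: "'a::ab_group_add set"
  assumes "finite P" "finite Q" "2 \<le> card P" "2 \<le> card Q"
    and "card (P + Q) + 1 = card P + card Q" "enat (card (P + Q)) < pG TYPE('a)"
  shows "progression (P + Q)"
  using assms
proof (induction "card Q" arbitrary: P Q rule: less_induct)
  case less
  show ?case
  proof (cases "\<exists>e. 2 \<le> card {x\<in>Q. e + x \<in> P} \<and> card {x\<in>Q. e + x \<in> P} < card Q")
    case True
    then obtain e where e: "2 \<le> card {x\<in>Q. e + x \<in> P}" "card {x\<in>Q. e + x \<in> P} < card Q"
      by blast
    define P' where "P' = P \<union> (+) e ` Q"
    define Q' where "Q' = {x\<in>Q. e + x \<in> P}"
    have "P \<noteq> {}"
      using less.prems(3) by auto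
    moreover have "Q' \<noteq> {}"
      using e(1) unfolding Q'_def by (metis card.empty not_numeral_le_zero)
    ultimately have sum: "P' + Q' = P + Q"
      unfolding P'_def Q'_def using critical_davenport_transform less.prems by blast
    have card_eq: "card P' + card Q' = card P + card Q"
      unfolding P'_def Q'_def using davenport_transform(1)[OF less.prems(1,2)] .
    have "card P \<le> card P'"
      using less.prems(1,2) unfolding P'_def by (intro card_mono) auto
    have "progression (P' + Q')"
    proof (rule less.hyps)
      show "card Q' < card Q" "2 \<le> card Q'"
        using e unfolding Q'_def by auto
      show "finite P'" "finite Q'"
        unfolding P'_def Q'_def using less.prems(1,2) by auto
      show "2 \<le> card P'"
        using \<open>card P \<le> card P'\<close> less.prems(3) by linarith
      show "card (P' + Q') + 1 = card P' + card Q'" "enat (card (P' + Q')) < pG TYPE('a)"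
        using sum card_eq less.prems(5,6) by simp_all
    qed
    then show ?thesis
      unfolding sum .
  next
    case False
    then have "card Q = 2"
      using critical_pair_card_le_two[OF less.prems False] less.prems(4) by linarith
    moreover from this have "card (P + Q) = card P + 1"
      using less.prems(5) by simp
    ultimately show ?thesis
      using less.prems(6) by (rule critical_sumset_pair_progression[OF less.prems(1)])
  qed
qed

section \<open>Hall's theorem\<close>

definition neighbours :: "('a \<Rightarrow> 'b \<Rightarrow> bool) \<Rightarrow> 'b set \<Rightarrow> 'a set \<Rightarrow> 'b set" where
  "neighbours R E S = {b\<in>E. \<exists>a\<in>S. R a b}"

definition matches :: "('a \<Rightarrow> 'b \<Rightarrow> bool) \<Rightarrow> 'a set \<Rightarrow> 'b set \<Rightarrow> bool" where
  "matches R A B \<longleftrightarrow> (\<exists>f. bij_betw f A B \<and> (\<forall>a\<in>A. R a (f a)))"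

definition hall_condition :: "('a \<Rightarrow> 'b \<Rightarrow> bool) \<Rightarrow> 'b set \<Rightarrow> 'a set \<Rightarrow> bool" where
  "hall_condition R E A \<longleftrightarrow> (\<forall>S\<subseteq>A. card S \<le> card (neighbours R E S))"

definition strict_hall_condition :: "('a \<Rightarrow> 'b \<Rightarrow> bool) \<Rightarrow> 'b set \<Rightarrow> 'a set \<Rightarrow> bool" where
  "strict_hall_condition R E A \<longleftrightarrow> (\<forall>S\<subseteq>A. S \<noteq> {} \<longrightarrow> card S < card (neighbours R E S))"

text \<open>The slack is what lets a matching of \<open>A\<close> be moved onto a basis of a sparse paving
  matroid of rank \<open>|A|\<close> on \<open>E\<close>: either every \<open>|A|\<close>-subset of \<open>E\<close> is a basis, or there are two
  matched sets differing in one element.\<close>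
definition hall_condition_with_slack :: "('a \<Rightarrow> 'b \<Rightarrow> bool) \<Rightarrow> 'b set \<Rightarrow> 'a set \<Rightarrow> bool" where
  "hall_condition_with_slack R E A \<longleftrightarrow> hall_condition R E A
     \<and> (card A \<le> 1 \<or> card A = card E \<or> card A < card (neighbours R E A))"

lemma neighbours_subset: "neighbours R E S \<subseteq> E"
  by (auto simp: neighbours_def)

lemma neighbours_Un: "neighbours R E (S \<union> T) = neighbours R E S \<union> neighbours R E T"
  by (auto simp: neighbours_def)

lemma neighbours_Diff: "neighbours R (E - X) S = neighbours R E S - X"
  by (auto simp: neighbours_def)

lemma card_neighbours_add_card_non_neighbours:
  assumes "finite E"
  shows "card (neighbours R E S) + card (E - neighbours R E S) = card E"
proof -
  have "finite (neighbours R E S)"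
    by (rule finite_subset[OF neighbours_subset assms])
  then have "card (E - neighbours R E S) = card E - card (neighbours R E S)"
    by (rule card_Diff_subset[OF _ neighbours_subset])
  moreover have "card (neighbours R E S) \<le> card E"
    by (rule card_mono[OF assms neighbours_subset])
  ultimately show ?thesis
    by linarith
qed

lemma hall_condition_with_slack_if_strict:
  assumes "strict_hall_condition R E A"
  shows "hall_condition_with_slack R E A"
proof -
  have "card S \<le> card (neighbours R E S)" if "S \<subseteq> A" for S
  proof (cases "S = {}")
    case False
    then show ?thesis
      using assms that unfolding strict_hall_condition_def by (blast intro: less_imp_le)
  qed simp
  moreover have "card A \<le> 1 \<or> card A < card (neighbours R E A)"
    using assms unfolding strict_hall_condition_def by (cases "A = {}") auto
  ultimately show ?thesis
    unfolding hall_condition_with_slack_def hall_condition_def by blast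
qed

lemma matches_empty: "matches R {} {}"
  by (simp add: matches_def bij_betw_def)

lemma matches_card: "matches R A B \<Longrightarrow> card A = card B"
  by (auto simp: matches_def bij_betw_same_card)

lemma matches_subset_neighbours: "matches R A B \<Longrightarrow> B \<subseteq> E \<Longrightarrow> B \<subseteq> neighbours R E A"
  by (auto simp: matches_def neighbours_def bij_betw_def)

lemma matches_Un:
  assumes "matches R A\<^sub>1 B\<^sub>1" "matches R A\<^sub>2 B\<^sub>2" "A\<^sub>1 \<inter> A\<^sub>2 = {}" "B\<^sub>1 \<inter> B\<^sub>2 = {}"
  shows "matches R (A\<^sub>1 \<union> A\<^sub>2) (B\<^sub>1 \<union> B\<^sub>2)"
proof -
  obtain f\<^sub>1 f\<^sub>2 where f: "bij_betw f\<^sub>1 A\<^sub>1 B\<^sub>1" "\<forall>a\<in>A\<^sub>1. R a (f\<^sub>1 a)" "bij_betw f\<^sub>2 A\<^sub>2 B\<^sub>2" "\<forall>a\<in>A\<^sub>2. R a (f\<^sub>2 a)"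
    using assms(1,2) unfolding matches_def by blast
  let ?f = "\<lambda>a. if a \<in> A\<^sub>1 then f\<^sub>1 a else f\<^sub>2 a"
  have "bij_betw ?f (A\<^sub>1 \<union> A\<^sub>2) (B\<^sub>1 \<union> B\<^sub>2)"
    using bij_betw_disjoint_Un[OF f(1,3) assms(3,4)] .
  moreover have "\<forall>a\<in>A\<^sub>1 \<union> A\<^sub>2. R a (?f a)"
    using f(2,4) assms(3) by auto
  ultimately show ?thesis
    unfolding matches_def by blast
qed

lemma matches_insert:
  assumes "matches R A B" "a \<notin> A" "b \<notin> B" "R a b"
  shows "matches R (insert a A) (insert b B)"
proof -
  have "matches R {a} {b}"
    using assms(4) unfolding matches_def by (intro exI[of _ "\<lambda>_. b"]) simp
  from matches_Un[OF this assms(1)] show ?thesis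
    using assms(2,3) by simp
qed

lemma hall_condition_Diff_tight:
  assumes "finite E" "finite A" "hall_condition R E A" "S \<subseteq> A"
    and tight: "card (neighbours R E S) \<le> card S"
  shows "hall_condition R (E - neighbours R E S) (A - S)"
  unfolding hall_condition_def
proof (intro allI impI)
  fix T
  assume "T \<subseteq> A - S"
  then have "T \<inter> S = {}" "T \<union> S \<subseteq> A"
    using assms(4) by auto
  then have "finite T" "finite S"
    using finite_subset[OF _ assms(2)] by auto
  then have "card T + card S = card (T \<union> S)"
    using \<open>T \<inter> S = {}\<close> by (simp add: card_Un_disjoint)
  also have "\<dots> \<le> card (neighbours R E (T \<union> S))"
    using assms(3) \<open>T \<union> S \<subseteq> A\<close> unfolding hall_condition_def by blast
  also have "\<dots> = card (neighbours R E T - neighbours R E S) + card (neighbours R E S)"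
  proof -
    have fin: "finite (neighbours R E X)" for X
      by (rule finite_subset[OF neighbours_subset assms(1)])
    have "neighbours R E (T \<union> S) = (neighbours R E T - neighbours R E S) \<union> neighbours R E S"
      unfolding neighbours_Un by blast
    also have "card \<dots> = card (neighbours R E T - neighbours R E S) + card (neighbours R E S)"
      by (rule card_Un_disjoint) (use fin in auto)
    finally show ?thesis .
  qed
  finally show "card T \<le> card (neighbours R (E - neighbours R E S) T)"
    unfolding neighbours_Diff using tight by linarith
qed

lemma hall_condition_remove_edge:
  assumes "finite E" "a \<in> A"
    and slack: "\<forall>S\<subseteq>A. S \<noteq> {} \<and> S \<noteq> A \<longrightarrow> card S < card (neighbours R E S)"
  shows "hall_condition R (E - {b}) (A - {a})"
  unfolding hall_condition_def
proof (intro allI impI)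
  fix T
  assume "T \<subseteq> A - {a}"
  show "card T \<le> card (neighbours R (E - {b}) T)"
  proof (cases "T = {}")
    case False
    moreover have "T \<subseteq> A" "T \<noteq> A"
      using \<open>T \<subseteq> A - {a}\<close> assms(2) by auto
    ultimately have "card T < card (neighbours R E T)"
      using slack by blast
    moreover have "card (neighbours R E T) - 1 \<le> card (neighbours R (E - {b}) T)"
      unfolding neighbours_Diff using diff_card_le_card_Diff[of "{b}"] by simp
    ultimately show ?thesis
      by linarith
  qed simp
qed

lemma hall_condition_neighbour:
  assumes "hall_condition R E A" "a \<in> A"
  shows "\<exists>b\<in>E. R a b"
proof -
  have "card {a} \<le> card (neighbours R E {a})"
    using assms unfolding hall_condition_def by blast
  then have "neighbours R E {a} \<noteq> {}"
    by auto
  then show ?thesis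
    unfolding neighbours_def by blast
qed

lemma matches_Un_Diff_neighbours:
  assumes "S \<subseteq> A" "matches R S B\<^sub>1" "B\<^sub>1 \<subseteq> E"
    and "matches R (A - S) B\<^sub>2" "B\<^sub>2 \<subseteq> E - neighbours R E S"
  shows "matches R A (B\<^sub>1 \<union> B\<^sub>2)"
proof -
  have "B\<^sub>1 \<inter> B\<^sub>2 = {}"
    using matches_subset_neighbours[OF assms(2,3)] assms(5) by blast
  then have "matches R (S \<union> (A - S)) (B\<^sub>1 \<union> B\<^sub>2)"
    using matches_Un[OF assms(2,4)] by blast
  moreover have "S \<union> (A - S) = A"
    using assms(1) by blast
  ultimately show ?thesis
    by simp
qed

text \<open>The proof of Halmos and Vaughan: split \<open>A\<close> along a nonempty proper subset \<open>S\<close> with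
  \<open>|N(S)| = |S|\<close> if there is one, and otherwise match any \<open>a \<in> A\<close> to any of its neighbours.\<close>
theorem hall_marriage:
  assumes "finite A" "finite E" "hall_condition R E A"
  shows "\<exists>B\<subseteq>E. matches R A B"
  using assms
proof (induction "card A" arbitrary: A E rule: less_induct)
  case less
  show ?case
  proof (cases "\<exists>S\<subseteq>A. S \<noteq> {} \<and> S \<noteq> A \<and> card (neighbours R E S) \<le> card S")
    case True
    then obtain S where tight: "S \<subseteq> A" "S \<noteq> {}" "S \<noteq> A" "card (neighbours R E S) \<le> card S"
      by blast
    have "S \<subset> A" "A - S \<subset> A"
      using tight(1-3) by auto
    then have "card S < card A" "card (A - S) < card A"
      using less.prems(1) psubset_card_mono by blast+
    moreover have "finite S"
      using tight(1) less.prems(1) by (rule finite_subset)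
    moreover have "hall_condition R E S"
      using less.prems(3) tight(1) unfolding hall_condition_def by auto
    moreover have "hall_condition R (E - neighbours R E S) (A - S)"
      using hall_condition_Diff_tight[OF less.prems(2,1,3) tight(1,4)] .
    ultimately obtain B\<^sub>1 B\<^sub>2 where "B\<^sub>1 \<subseteq> E" "matches R S B\<^sub>1"
      and "B\<^sub>2 \<subseteq> E - neighbours R E S" "matches R (A - S) B\<^sub>2"
      using less.hyps[of S E] less.hyps[of "A - S" "E - neighbours R E S"] less.prems(1,2) by auto
    then have "matches R A (B\<^sub>1 \<union> B\<^sub>2)" "B\<^sub>1 \<union> B\<^sub>2 \<subseteq> E"
      using matches_Un_Diff_neighbours[OF tight(1)] by blast+
    then show ?thesis
      by blast
  next
    case False
    then have slack: "\<forall>S\<subseteq>A. S \<noteq> {} \<and> S \<noteq> A \<longrightarrow> card S < card (neighbours R E S)"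
      by (auto simp: not_le)
    show ?thesis
    proof (cases "A = {}")
      case True
      then show ?thesis
        using matches_empty by blast
    next
      case False
      then obtain a where "a \<in> A"
        by blast
      then obtain b where b: "b \<in> E" "R a b"
        using hall_condition_neighbour[OF less.prems(3)] by blast
      have "card (A - {a}) < card A"
        using less.prems(1) \<open>a \<in> A\<close> by (rule card_Diff1_less)
      moreover have "hall_condition R (E - {b}) (A - {a})"
        using hall_condition_remove_edge[OF less.prems(2) \<open>a \<in> A\<close> slack] .
      ultimately obtain B where B: "B \<subseteq> E - {b}" "matches R (A - {a}) B"
        using less.hyps less.prems(1,2) by blast
      then have "matches R (insert a (A - {a})) (insert b B)"
        using b(2) by (intro matches_insert) auto
      then have "matches R A (insert b B)"
        using \<open>a \<in> A\<close> by (simp add: insert_absorb)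
      moreover have "insert b B \<subseteq> E"
        using B(1) b(1) by blast
      ultimately show ?thesis
        by blast
    qed
  qed
qed

lemma matches_exchange:
  assumes "finite A" "finite E" "hall_condition R E A" "card A < card (neighbours R E A)"
  obtains C b c where "C \<subseteq> E" "b \<in> E - C" "c \<in> E - C" "b \<noteq> c"
    "matches R A (insert b C)" "matches R A (insert c C)"
proof -
  obtain B where B: "B \<subseteq> E" "matches R A B"
    using hall_marriage[OF assms(1-3)] by blast
  then obtain f where f: "bij_betw f A B" "\<forall>a\<in>A. R a (f a)"
    unfolding matches_def by blast
  have "card B < card (neighbours R E A)"
    using matches_card[OF B(2)] assms(4) by simp
  moreover have "finite B"
    using B(1) assms(2) by (rule finite_subset)
  ultimately have "\<not> neighbours R E A \<subseteq> B"
    using card_mono leD by blast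
  then obtain c where c: "c \<in> neighbours R E A" "c \<notin> B"
    by blast
  then obtain a where a: "a \<in> A" "R a c" "c \<in> E"
    unfolding neighbours_def by blast
  have "bij_betw f (A - {a}) (B - {f a})"
    using f(1) a(1) by (intro bij_betw_DiffI) (auto simp: bij_betw_def)
  then have "matches R (A - {a}) (B - {f a})"
    using f(2) unfolding matches_def by auto
  then have "matches R (insert a (A - {a})) (insert c (B - {f a}))"
    using a c(2) by (intro matches_insert) auto
  moreover have "insert a (A - {a}) = A"
    using a(1) by blast
  ultimately have "matches R A (insert c (B - {f a}))"
    by simp
  moreover have "f a \<in> B"
    using f(1) a(1) by (auto simp: bij_betw_def)
  then have "matches R A (insert (f a) (B - {f a}))"
    using B(2) by (simp add: insert_absorb)
  ultimately show ?thesis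
    using that[of "B - {f a}" "f a" c] B(1) a(3) c(2) \<open>f a \<in> B\<close> by blast
qed

section \<open>Matroids\<close>

lemma matroid_finite: "matroid E I \<Longrightarrow> finite E"
  by (simp add: matroid_def)

lemma indep_subset_ground: "matroid E I \<Longrightarrow> I X \<Longrightarrow> X \<subseteq> E"
  by (simp add: matroid_def)

lemma indep_augment: "matroid E I \<Longrightarrow> I X \<Longrightarrow> I Y \<Longrightarrow> card X < card Y \<Longrightarrow> \<exists>y\<in>Y - X. I (insert y X)"
  by (simp add: matroid_def)

lemma finite_card_indep:
  assumes "matroid E I"
  shows "finite (card ` Collect I)"
proof -
  have "Collect I \<subseteq> Pow E"
    using indep_subset_ground[OF assms] by blast
  then have "finite (Collect I)"
    by (rule finite_subset) (simp add: matroid_finite[OF assms])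
  then show ?thesis
    by simp
qed

lemma card_indep_le_mrank: "matroid E I \<Longrightarrow> I X \<Longrightarrow> card X \<le> mrank E I"
  unfolding mrank_def by (rule Max_ge[OF finite_card_indep]) auto

lemma ex_indep_card_mrank:
  assumes "matroid E I"
  shows "\<exists>X. I X \<and> card X = mrank E I"
proof -
  have "I {}"
    using assms by (simp add: matroid_def)
  then have "mrank E I \<in> card ` Collect I"
    unfolding mrank_def using finite_card_indep[OF assms] by (intro Max_in) auto
  then show ?thesis
    by auto
qed

lemma basis_subset_ground: "matroid E I \<Longrightarrow> basis E I B \<Longrightarrow> B \<subseteq> E"
  by (simp add: basis_def indep_subset_ground)

lemma basis_if_card_mrank:
  assumes "matroid E I" "I X" "card X = mrank E I"
  shows "basis E I X"
  unfolding basis_def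
proof (intro conjI allI impI)
  fix Y
  assume Y: "I Y \<and> X \<subseteq> Y"
  then have "Y \<subseteq> E"
    using indep_subset_ground[OF assms(1)] by blast
  then have "finite Y"
    using matroid_finite[OF assms(1)] by (rule finite_subset)
  moreover have "card Y \<le> card X"
    using card_indep_le_mrank[OF assms(1)] Y assms(3) by simp
  ultimately have "X = Y"
    using Y by (intro card_seteq) auto
  then show "Y = X"
    by simp
qed (rule assms(2))

lemma card_basis:
  assumes "matroid E I" "basis E I B"
  shows "card B = mrank E I"
proof -
  obtain X where X: "I X" "card X = mrank E I"
    using ex_indep_card_mrank[OF assms(1)] by blast
  have "I B"
    using assms(2) by (simp add: basis_def)
  have "\<not> card B < card X"
  proof
    assume "card B < card X"
    then obtain y where "y \<in> X - B" "I (insert y B)"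
      using indep_augment[OF assms(1) \<open>I B\<close> X(1)] by blast
    then show False
      using assms(2) unfolding basis_def by blast
  qed
  then show ?thesis
    using card_indep_le_mrank[OF assms(1) \<open>I B\<close>] X(2) by linarith
qed

lemma mrank_dual:
  assumes "matroid E I"
  shows "mrank E (dual_indep E I) = card E - mrank E I"
proof -
  have card_compl: "card (E - B) = card E - mrank E I" if "basis E I B" for B
  proof -
    have "B \<subseteq> E"
      using that assms indep_subset_ground unfolding basis_def by blast
    then show ?thesis
      using card_Diff_subset[OF finite_subset[OF _ matroid_finite[OF assms]]] card_basis[OF assms that]
      by simp
  qed
  obtain B where B: "basis E I B"
    using ex_indep_card_mrank[OF assms] basis_if_card_mrank[OF assms] by blast
  have "dual_indep E I (E - B)"
    unfolding dual_indep_def using B by blast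
  then have "card E - mrank E I \<in> card ` Collect (dual_indep E I)"
    using card_compl[OF B] by (metis imageI mem_Collect_eq)
  moreover have "card X \<le> card E - mrank E I" if X: "dual_indep E I X" for X
  proof -
    obtain B' where "X \<subseteq> E - B'" "basis E I B'"
      using X unfolding dual_indep_def by blast
    then show ?thesis
      using card_mono[OF _ \<open>X \<subseteq> E - B'\<close>] matroid_finite[OF assms] card_compl by simp
  qed
  moreover have "finite (card ` Collect (dual_indep E I))"
  proof -
    have "Collect (dual_indep E I) \<subseteq> Pow E"
      unfolding dual_indep_def by blast
    then have "finite (Collect (dual_indep E I))"
      by (rule finite_subset) (simp add: matroid_finite[OF assms])
    then show ?thesis
      by simp
  qed
  ultimately show ?thesis
    unfolding mrank_def[of E "dual_indep E I"] by (intro Max_eqI) auto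
qed

text \<open>The \<open>n + 1\<close> elements \<open>C \<union> {b, c}\<close> contain a basis, since their complement is
  dual independent by the paving property of the dual; augmenting \<open>C\<close> from that basis adds
  \<open>b\<close> or \<open>c\<close>.\<close>
lemma sparse_paving_exchange:
  assumes "matroid E I" "sparse_paving E I" "C \<subseteq> E" "b \<in> E - C" "c \<in> E - C" "b \<noteq> c"
    and "card (insert b C) = mrank E I"
  shows "I (insert b C) \<or> I (insert c C)"
proof -
  let ?D = "insert b (insert c C)"
  have "finite E"
    using assms(1) by (rule matroid_finite)
  have "finite C"
    using assms(3) \<open>finite E\<close> by (rule finite_subset)
  have card_C: "card C + 1 = mrank E I"
    using assms(4,7) \<open>finite C\<close> by simp
  then have "I C"
    using assms(2,3) unfolding sparse_paving_def paving_def by auto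
  have "?D \<subseteq> E" "card ?D = mrank E I + 1"
    using assms(3-6) \<open>finite C\<close> card_C by auto
  have "card (E - ?D) = card E - card ?D"
    using finite_subset[OF \<open>?D \<subseteq> E\<close> \<open>finite E\<close>] \<open>?D \<subseteq> E\<close> by (rule card_Diff_subset)
  also have "\<dots> = mrank E (dual_indep E I) - 1"
    using mrank_dual[OF assms(1)] \<open>card ?D = mrank E I + 1\<close> by simp
  finally have "dual_indep E I (E - ?D)"
    using assms(2) unfolding sparse_paving_def paving_def by blast
  then obtain W where W: "basis E I W" "(E - ?D) \<inter> W = {}"
    unfolding dual_indep_def by blast
  moreover have "W \<subseteq> E"
    using W(1) indep_subset_ground[OF assms(1)] unfolding basis_def by blast
  ultimately have W: "basis E I W" "W \<subseteq> ?D"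
    by blast+
  then have "I W" "card C < card W"
    using card_basis[OF assms(1)] card_C by (auto simp: basis_def)
  then obtain y where "y \<in> W - C" "I (insert y C)"
    using indep_augment[OF assms(1) \<open>I C\<close>] by blast
  then show ?thesis
    using W(2) by blast
qed

lemma indep_if_mrank_le_one_or_full:
  assumes "matroid E I" "loopless E I" "X \<subseteq> E" "card X = mrank E I"
    and "mrank E I \<le> 1 \<or> mrank E I = card E"
  shows "I X"
  using assms(5)
proof (elim disjE)
  assume "mrank E I \<le> 1"
  have "finite X"
    using assms(3) matroid_finite[OF assms(1)] by (rule finite_subset)
  moreover have "card X \<le> 1"
    using assms(4) \<open>mrank E I \<le> 1\<close> by simp
  ultimately consider "X = {}" | x where "X = {x}"
    by (cases "card X") (auto simp: card_1_singleton_iff)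
  then show "I X"
    using assms(1-3) unfolding matroid_def loopless_def by cases auto
next
  assume "mrank E I = card E"
  then have "X = E"
    using card_subset_eq[OF matroid_finite[OF assms(1)] assms(3)] assms(4) by simp
  moreover obtain Y where "I Y" "card Y = card E"
    using ex_indep_card_mrank[OF assms(1)] \<open>mrank E I = card E\<close> by auto
  then have "Y = E"
    using card_subset_eq[OF matroid_finite[OF assms(1)] indep_subset_ground[OF assms(1)]] by simp
  ultimately show "I X"
    using \<open>I Y\<close> by simp
qed

lemma sparse_paving_matched_basis:
  assumes "matroid E I" "loopless E I" "sparse_paving E I"
    and "finite A" "card A = mrank E I" and slack: "hall_condition_with_slack R E A"
  shows "\<exists>B. basis E I B \<and> matches R A B"
proof (cases "card A < card (neighbours R E A)")
  case True
  have "hall_condition R E A"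
    using slack unfolding hall_condition_with_slack_def by blast
  obtain C b c where Cbc: "C \<subseteq> E" "b \<in> E - C" "c \<in> E - C" "b \<noteq> c"
    "matches R A (insert b C)" "matches R A (insert c C)"
    by (rule matches_exchange[OF assms(4) matroid_finite[OF assms(1)] \<open>hall_condition R E A\<close> True])
  have card: "card (insert b C) = mrank E I" "card (insert c C) = mrank E I"
    using matches_card[OF Cbc(5)] matches_card[OF Cbc(6)] assms(5) by simp_all
  then have "I (insert b C) \<or> I (insert c C)"
    using sparse_paving_exchange[OF assms(1,3) Cbc(1-4)] by simp
  then have "basis E I (insert b C) \<or> basis E I (insert c C)"
    using basis_if_card_mrank[OF assms(1)] card by blast
  then show ?thesis
    using Cbc(5,6) by blast
next
  case False
  have "hall_condition R E A"
    using slack unfolding hall_condition_with_slack_def by blast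
  then obtain B where B: "B \<subseteq> E" "matches R A B"
    using hall_marriage[OF assms(4) matroid_finite[OF assms(1)]] by blast
  then have "card B = mrank E I"
    using matches_card[OF B(2)] assms(5) by simp
  moreover have "mrank E I \<le> 1 \<or> mrank E I = card E"
    using slack False assms(5) unfolding hall_condition_with_slack_def by auto
  ultimately have "I B"
    using indep_if_mrank_le_one_or_full[OF assms(1,2) B(1)] by blast
  then show ?thesis
    using basis_if_card_mrank[OF assms(1)] \<open>card B = mrank E I\<close> B(2) by blast
qed

section \<open>Matching bases of matroids over a group\<close>

definition sum_avoids :: "'a::ab_group_add set \<Rightarrow> 'a \<Rightarrow> 'a \<Rightarrow> bool" where
  "sum_avoids M a b \<longleftrightarrow> a + b \<notin> M"

lemma basis_matched_iff_matches: "basis_matched M A B \<longleftrightarrow> matches (sum_avoids M) A B"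
  by (simp add: basis_matched_def matches_def sum_avoids_def)

lemma non_neighbours_sum_avoids: "E - neighbours (sum_avoids M) E S = {b\<in>E. \<forall>a\<in>S. a + b \<in> M}"
  by (auto simp: neighbours_def sum_avoids_def)

lemma non_neighbours_sumset_subset:
  assumes "S \<subseteq> M"
  shows "insert 0 (E - neighbours (sum_avoids M) E S) + S \<subseteq> M"
  using assms by (auto simp: non_neighbours_sum_avoids add.commute elim!: set_plus_elim)

lemma card_non_neighbours_add_card_le:
  fixes M E S :: "'a::ab_group_add set"
  assumes "finite M" "finite E" "S \<subseteq> M" "S \<noteq> {}" "0 \<notin> E" "enat (card M) < pG TYPE('a)"
  shows "card (E - neighbours (sum_avoids M) E S) + card S \<le> card M"
proof -
  let ?P = "insert 0 (E - neighbours (sum_avoids M) E S)"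
  have "?P + S \<subseteq> M"
    using assms(3) by (rule non_neighbours_sumset_subset)
  then have "card (?P + S) \<le> card M"
    using assms(1) by (rule card_mono[rotated])
  then have "enat (card (?P + S)) < pG TYPE('a)"
    using assms(6) by (rule less_pG_if_le)
  moreover have "finite ?P" "finite S"
    using assms(2) finite_subset[OF assms(3,1)] by auto
  ultimately have "card ?P + card S \<le> card (?P + S) + 1"
    using cauchy_davenport assms(4) by blast
  moreover have "card ?P = card (E - neighbours (sum_avoids M) E S) + 1"
    using assms(2,5) by simp
  ultimately show ?thesis
    using \<open>card (?P + S) \<le> card M\<close> by linarith
qed

lemma card_non_neighbours_le:
  fixes M E S :: "'a::ab_group_add set"
  assumes "finite M" "a \<in> S"
  shows "card (E - neighbours (sum_avoids M) E S) \<le> card M"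
proof -
  have "(+) a ` (E - neighbours (sum_avoids M) E S) \<subseteq> M"
    using assms(2) by (auto simp: non_neighbours_sum_avoids)
  then have "card ((+) a ` (E - neighbours (sum_avoids M) E S)) \<le> card M"
    using assms(1) by (rule card_mono[rotated])
  then show ?thesis
    by (simp add: card_image)
qed

lemma strict_hall_sum_avoids_if_small:
  fixes M E A :: "'a::ab_group_add set"
  assumes "finite M" "finite E" "A \<subseteq> M" "0 \<notin> E"
    and "card M \<le> card E - 1" "enat (card M) < pG TYPE('a)"
  shows "strict_hall_condition (sum_avoids M) E A"
  unfolding strict_hall_condition_def
proof (intro allI impI)
  fix S
  assume "S \<subseteq> A" "S \<noteq> {}"
  then have "S \<subseteq> M"
    using assms(3) by blast
  then have "card (E - neighbours (sum_avoids M) E S) + card S \<le> card M"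
    using card_non_neighbours_add_card_le[OF assms(1,2) _ \<open>S \<noteq> {}\<close> assms(4,6)] by blast
  moreover have "0 < card S"
    using finite_subset[OF \<open>S \<subseteq> M\<close> assms(1)] \<open>S \<noteq> {}\<close> by (simp add: card_gt_0_iff)
  ultimately show "card S < card (neighbours (sum_avoids M) E S)"
    using card_neighbours_add_card_non_neighbours[OF assms(2), of "sum_avoids M" S] assms(5) by arith
qed

lemma strict_hall_sum_avoids_if_large_gap:
  fixes M E A :: "'a::ab_group_add set"
  assumes "finite M" "finite E" "finite A"
    and "int (card M) < int (card E) - int (card A) - 1"
  shows "strict_hall_condition (sum_avoids M) E A"
  unfolding strict_hall_condition_def
proof (intro allI impI)
  fix S
  assume "S \<subseteq> A" "S \<noteq> {}"
  then obtain a where "a \<in> S"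
    by blast
  have "card S \<le> card A"
    using assms(3) \<open>S \<subseteq> A\<close> by (rule card_mono)
  then show "card S < card (neighbours (sum_avoids M) E S)"
    using card_non_neighbours_le[OF assms(1) \<open>a \<in> S\<close>, of E]
      card_neighbours_add_card_non_neighbours[OF assms(2), of "sum_avoids M" S] assms(4) by linarith
qed

text \<open>A tight Hall condition for all of \<open>A\<close> makes the Cauchy--Davenport pair
  \<open>({0} \<union> X, A)\<close>, \<open>X\<close> the non-neighbours of \<open>A\<close>, critical with sumset \<open>M\<close>.\<close>
lemma progression_if_hall_tight:
  fixes M E A :: "'a::ab_group_add set"
  assumes "finite M" "finite E" "A \<subseteq> M" "0 \<notin> E" "2 \<le> card A" "card A < card M"
    and tight: "card (E - neighbours (sum_avoids M) E A) + card A = card M"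
    and "enat (card M) < pG TYPE('a)"
  shows "progression M"
proof -
  let ?P = "insert 0 (E - neighbours (sum_avoids M) E A)"
  have "finite A"
    using assms(3,1) by (rule finite_subset)
  have card_P: "card ?P = card (E - neighbours (sum_avoids M) E A) + 1"
    using assms(2,4) by simp
  have sub: "?P + A \<subseteq> M"
    using assms(3) by (rule non_neighbours_sumset_subset)
  then have "card (?P + A) \<le> card M"
    using assms(1) by (rule card_mono[rotated])
  then have small: "enat (card (?P + A)) < pG TYPE('a)"
    using assms(8) by (rule less_pG_if_le)
  moreover have "finite ?P" "A \<noteq> {}"
    using assms(2,5) by auto
  ultimately have "card ?P + card A \<le> card (?P + A) + 1"
    using cauchy_davenport \<open>finite A\<close> by blast
  then have "card (?P + A) = card M"
    using \<open>card (?P + A) \<le> card M\<close> card_P tight by linarith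
  then have "?P + A = M"
    using card_subset_eq[OF assms(1) sub] by blast
  moreover have "progression (?P + A)"
  proof (rule sumset_progression_if_critical)
    show "finite ?P" "finite A" "2 \<le> card A" "2 \<le> card ?P"
      using \<open>finite ?P\<close> \<open>finite A\<close> assms(5,6) card_P tight by auto
    show "card (?P + A) + 1 = card ?P + card A"
      using \<open>card (?P + A) = card M\<close> card_P tight by simp
  qed (rule small)
  ultimately show ?thesis
    by simp
qed

lemma hall_sum_avoids_if_not_progression:
  fixes M E A :: "'a::ab_group_add set"
  assumes "finite M" "finite E" "A \<subseteq> M" "0 \<notin> E"
    and "\<not> progression M" "card M = card E" "enat (card E) < pG TYPE('a)"
  shows "hall_condition_with_slack (sum_avoids M) E A"
proof -
  have small: "enat (card M) < pG TYPE('a)"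
    using assms(6,7) by simp
  have card_nb: "card (neighbours (sum_avoids M) E S) + card (E - neighbours (sum_avoids M) E S) = card M"
    for S
    using card_neighbours_add_card_non_neighbours[OF assms(2)] assms(6) by simp
  have bound: "card (E - neighbours (sum_avoids M) E S) + card S \<le> card M"
    if "S \<subseteq> A" "S \<noteq> {}" for S
    using card_non_neighbours_add_card_le[OF assms(1,2) _ that(2) assms(4) small] that(1) assms(3)
    by blast
  have hall: "hall_condition (sum_avoids M) E A"
    unfolding hall_condition_def
  proof (intro allI impI)
    fix S
    assume "S \<subseteq> A"
    show "card S \<le> card (neighbours (sum_avoids M) E S)"
    proof (cases "S = {}")
      case False
      then show ?thesis
        using bound[OF \<open>S \<subseteq> A\<close> False] card_nb[of S] by linarith
    qed simp
  qed
  have "card A \<le> 1 \<or> card A = card E \<or> card A < card (neighbours (sum_avoids M) E A)"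
  proof (rule ccontr)
    assume "\<not> ?thesis"
    then have "2 \<le> card A" "card A \<noteq> card M" "card (neighbours (sum_avoids M) E A) \<le> card A"
      using assms(6) by auto
    moreover have "card A \<le> card M"
      using assms(1,3) by (rule card_mono)
    moreover have "A \<noteq> {}"
      using \<open>2 \<le> card A\<close> by auto
    ultimately have "card A < card M" "card (E - neighbours (sum_avoids M) E A) + card A = card M"
      using bound[OF order_refl \<open>A \<noteq> {}\<close>] card_nb[of A] by linarith+
    with \<open>2 \<le> card A\<close> have "progression M"
      using progression_if_hall_tight[OF assms(1-4) _ _ _ small] by blast
    then show False
      using assms(5) by simp
  qed
  with hall show ?thesis
    unfolding hall_condition_with_slack_def by blast
qed

lemma hall_condition_with_slack_sum_avoids:
  fixes M E A :: "'a::ab_group_add set"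
  assumes "finite M" "finite E" "A \<subseteq> M" "0 \<notin> E"
    and "enat (card M) < min (enat (card E - 1)) (pG TYPE('a))
       \<or> (card M = card E - 1 \<and> enat (card E) < pG TYPE('a))
       \<or> (\<not> progression M \<and> card M = card E \<and> enat (card E) < pG TYPE('a))
       \<or> int (card M) < int (card E) - int (card A) - 1"
  shows "hall_condition_with_slack (sum_avoids M) E A"
  using assms(5)
proof (elim disjE conjE)
  assume "enat (card M) < min (enat (card E - 1)) (pG TYPE('a))"
  then have "card M \<le> card E - 1" "enat (card M) < pG TYPE('a)"
    by simp_all
  from strict_hall_sum_avoids_if_small[OF assms(1-4) this] show ?thesis
    by (rule hall_condition_with_slack_if_strict)
next
  assume "card M = card E - 1" "enat (card E) < pG TYPE('a)"
  then have "card M \<le> card E - 1" "enat (card M) < pG TYPE('a)"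
    using less_pG_if_le[of "card M" "card E"] by simp_all
  from strict_hall_sum_avoids_if_small[OF assms(1-4) this] show ?thesis
    by (rule hall_condition_with_slack_if_strict)
next
  assume "\<not> progression M" "card M = card E" "enat (card E) < pG TYPE('a)"
  from hall_sum_avoids_if_not_progression[OF assms(1-4) this] show ?thesis .
next
  assume "int (card M) < int (card E) - int (card A) - 1"
  from strict_hall_sum_avoids_if_large_gap[OF assms(1,2) finite_subset[OF assms(3,1)] this] show ?thesis
    by (rule hall_condition_with_slack_if_strict)
qed

theorem theorem2p3:
  fixes EM EN :: "'a::ab_group_add set"
    and IM IN :: "'a set \<Rightarrow> bool"
    and n :: nat
  assumes "matroid EM IM" and "loopless EM IM"
    and "matroid EN IN" and "loopless EN IN"
    and "sparse_paving EN IN"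
    and "mrank EM IM = n" and "mrank EN IN = n"
    and "0 \<notin> EN"
    and "enat (card EM) < min (enat (card EN - 1)) (pG TYPE('a))
       \<or> (\<not> progression EM \<and> finite (UNIV :: 'a set) \<and> card EM = card EN - 1
           \<and> enat (card EN) < pG TYPE('a))
       \<or> (\<not> progression EM \<and> \<not> semi_progression EM \<and> finite (UNIV :: 'a set)
           \<and> card EM = card EN \<and> enat (card EN) < pG TYPE('a))
       \<or> int (card EM) < int (card EN) - int n - 1"
  shows "matched EM IM EN IN"
  unfolding matched_def basis_matched_iff_matches
proof (intro allI impI)
  fix A
  assume "basis EM IM A"
  then have "A \<subseteq> EM" "card A = n"
    using basis_subset_ground[OF assms(1)] card_basis[OF assms(1)] assms(6) by auto
  have "finite EM" "finite EN"
    using matroid_finite assms(1,3) by blast+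
  then have "hall_condition_with_slack (sum_avoids EM) EN A"
    using \<open>A \<subseteq> EM\<close> assms(8)
    by (rule hall_condition_with_slack_sum_avoids) (use assms(9) \<open>card A = n\<close> in auto)
  then show "\<exists>B. basis EN IN B \<and> matches (sum_avoids EM) A B"
    using sparse_paving_matched_basis[OF assms(3-5) finite_subset[OF \<open>A \<subseteq> EM\<close> \<open>finite EM\<close>]]
      \<open>card A = n\<close> assms(7) by simp
qed

end
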